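(* Let $G$ be a graph and $F\subseteq E(G)$ such that $G/F$ is a cactus, and let $\mathcal{W}$ be the $G/F$-witness structure of $G$. Then there exists a coloring $f:V(G)\to\{1,2,3\}$ that is compatible with $\mathcal{W}$.
   Context: A cactus is a connected graph in which every edge lies in at most one cycle. For $F\subseteq E(G)$, $G/F$ is the graph whose vertices correspond to the parts of the partition of $V(G)$ into the vertex sets of connected components of $(V(F),F)$ and singletons $\{v\}$ for $v\notin V(F)$, two parts adjacent iff some edge of $G$ joins them; this partition is the $G/F$-witness structure $\mathcal{W}$, and the part corresponding to vertex $t$ of $T=G/F$ is denoted $W(t)$. A witness set is big if it has at least two vertices, singleton otherwise. A cable path in a graph $H$ is a path $(v_1,\dots,v_q)$ such that for each $2\le i\le q-1$, $N_H(v_i)=\{v_{i-1},v_{i+1}\}$. A coloring $f:V(G)\to\{1,2,3\}$ is compatible with the $T$-witness structure $\mathcal{W}$ if: (1) every witness set $W(t)$ is monochromatic (so $f(W(t))$ is well defined); (2) for every edge $t_xt_y\in E(T)$ with $W(t_x),W(t_y)$ both big, $f(W(t_x))\ne f(W(t_y))$; (3) for every cable path $(t_x,t_1,\dots,t_q,t_y)$ in $T$ ($q\ge1$) with $W(t_x),W(t_y)$ big and all $W(t_i)$ ($1\le i\le q$) singleton, $f(W(t_x))\neq f(W(t_1))$ and $f(W(t_y))\ne f(W(t_q))$. *)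

theory Defs
  imports Main
begin

definition graph :: "'a set \<Rightarrow> 'a set set \<Rightarrow> bool" where
  "graph V E \<longleftrightarrow> finite V \<and> (\<forall>e\<in>E. \<exists>u v. e = {u, v} \<and> u \<noteq> v \<and> u \<in> V \<and> v \<in> V)"

definition adj_rel :: "'a set set \<Rightarrow> ('a \<times> 'a) set" where
  "adj_rel E = {(u, v). {u, v} \<in> E}"

definition nbhd :: "'a set set \<Rightarrow> 'a \<Rightarrow> 'a set" where
  "nbhd E v = {u. {u, v} \<in> E}"

definition connected_graph :: "'a set \<Rightarrow> 'a set set \<Rightarrow> bool" where
  "connected_graph V E \<longleftrightarrow> (\<forall>u\<in>V. \<forall>v\<in>V. (u, v) \<in> (adj_rel E)\<^sup>*)"

definition cycle_edges :: "'a list \<Rightarrow> 'a set set" where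
  "cycle_edges vs = {{vs ! i, vs ! ((i + 1) mod length vs)} | i. i < length vs}"

definition is_cycle :: "'a set \<Rightarrow> 'a set set \<Rightarrow> 'a set set \<Rightarrow> bool" where
  "is_cycle V E C \<longleftrightarrow> (\<exists>vs. length vs \<ge> 3 \<and> distinct vs \<and> set vs \<subseteq> V
       \<and> cycle_edges vs \<subseteq> E \<and> C = cycle_edges vs)"

definition cactus :: "'a set \<Rightarrow> 'a set set \<Rightarrow> bool" where
  "cactus V E \<longleftrightarrow> graph V E \<and> connected_graph V E \<and>
     (\<forall>e\<in>E. \<forall>C1 C2. is_cycle V E C1 \<and> is_cycle V E C2 \<and> e \<in> C1 \<and> e \<in> C2 \<longrightarrow> C1 = C2)"

text \<open>Witness set of v in G/F: the vertex set of the component of (V(F),F) containing v,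
  or {v} if v is not covered by F.\<close>
definition witness_set :: "'a set \<Rightarrow> 'a set set \<Rightarrow> 'a \<Rightarrow> 'a set" where
  "witness_set V F v = {u \<in> V. (v, u) \<in> (adj_rel F)\<^sup>*}"

text \<open>The G/F-witness structure; the vertices of G/F are identified with the witness sets,
  so W(t) = t.\<close>
definition witness_structure :: "'a set \<Rightarrow> 'a set set \<Rightarrow> 'a set set" where
  "witness_structure V F = witness_set V F ` V"

definition contr_edges :: "'a set \<Rightarrow> 'a set set \<Rightarrow> 'a set set \<Rightarrow> 'a set set set" where
  "contr_edges V E F = {{X, Y} | X Y. X \<in> witness_structure V F \<and> Y \<in> witness_structure V F
      \<and> X \<noteq> Y \<and> (\<exists>x\<in>X. \<exists>y\<in>Y. {x, y} \<in> E)}"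

definition big :: "'a set \<Rightarrow> bool" where
  "big X \<longleftrightarrow> card X \<ge> 2"

definition cable_path :: "'b set \<Rightarrow> 'b set set \<Rightarrow> 'b list \<Rightarrow> bool" where
  "cable_path VH EH p \<longleftrightarrow> p \<noteq> [] \<and> distinct p \<and> set p \<subseteq> VH
     \<and> (\<forall>i. i + 1 < length p \<longrightarrow> {p ! i, p ! (i + 1)} \<in> EH)
     \<and> (\<forall>i. 0 < i \<and> i + 1 < length p \<longrightarrow> nbhd EH (p ! i) = {p ! (i - 1), p ! (i + 1)})"

definition compatible :: "'a set \<Rightarrow> 'a set set \<Rightarrow> 'a set set \<Rightarrow> ('a \<Rightarrow> nat) \<Rightarrow> bool" where
  "compatible V E F f \<longleftrightarrow>
     (\<forall>W\<in>witness_structure V F. \<forall>x\<in>W. \<forall>y\<in>W. f x = f y)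
   \<and> (\<forall>X Y. {X, Y} \<in> contr_edges V E F \<and> big X \<and> big Y \<longrightarrow> (\<forall>x\<in>X. \<forall>y\<in>Y. f x \<noteq> f y))
   \<and> (\<forall>p. cable_path (witness_structure V F) (contr_edges V E F) p \<and> length p \<ge> 3
         \<and> big (hd p) \<and> big (last p) \<and> (\<forall>i. 0 < i \<and> i + 1 < length p \<longrightarrow> \<not> big (p ! i))
         \<longrightarrow> (\<forall>x\<in>p ! 0. \<forall>y\<in>p ! 1. f x \<noteq> f y)
           \<and> (\<forall>x\<in>p ! (length p - 1). \<forall>y\<in>p ! (length p - 2). f x \<noteq> f y))"

end

theory Submission
  imports Defs
begin

text \<open>A graph in which no edge lies on two distinct cycles has a vertex of degree at most two:
  all neighbours of the first vertex of a longest path lie on the path, and two of them beyond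
  the second vertex would close two distinct cycles through the first edge of the path.
  Deleting such a vertex and recursing, these graphs (in particular cacti) are properly
  3-colourable. Pulling a proper 3-colouring of the cactus \<open>G/F\<close> back along \<open>v \<mapsto> W(v)\<close> gives a
  colouring that is constant on witness sets and separates the ends of every edge of \<open>G/F\<close>,
  which is more than compatibility asks for.\<close>

definition edges_in_unique_cycle :: "'b set \<Rightarrow> 'b set set \<Rightarrow> bool" where
  "edges_in_unique_cycle V E \<longleftrightarrow>
     (\<forall>e\<in>E. \<forall>C1 C2. is_cycle V E C1 \<and> is_cycle V E C2 \<and> e \<in> C1 \<and> e \<in> C2 \<longrightarrow> C1 = C2)"

definition graph_path :: "'b set \<Rightarrow> 'b set set \<Rightarrow> 'b list \<Rightarrow> bool" where
  "graph_path V E ps \<longleftrightarrow> ps \<noteq> [] \<and> distinct ps \<and> set ps \<subseteq> V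
     \<and> (\<forall>i. i + 1 < length ps \<longrightarrow> {ps ! i, ps ! (i + 1)} \<in> E)"

definition proper_colouring :: "'b set set \<Rightarrow> ('b \<Rightarrow> nat) \<Rightarrow> bool" where
  "proper_colouring E c \<longleftrightarrow> (\<forall>u v. {u, v} \<in> E \<longrightarrow> c u \<noteq> c v)"

lemma cactus_edges_in_unique_cycle: "cactus V E \<Longrightarrow> edges_in_unique_cycle V E"
  unfolding cactus_def edges_in_unique_cycle_def by blast

lemma graph_edge_neq: "graph V E \<Longrightarrow> {u, v} \<in> E \<Longrightarrow> u \<noteq> v"
  unfolding graph_def by (metis doubleton_eq_iff)

lemma graph_edge_in_vertices: "graph V E \<Longrightarrow> {u, v} \<in> E \<Longrightarrow> u \<in> V"
  unfolding graph_def by (metis doubleton_eq_iff)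

lemma graph_nbhd_subset: "graph V E \<Longrightarrow> nbhd E x \<subseteq> V"
  unfolding nbhd_def using graph_edge_in_vertices by fast

lemma cycle_edges_subset_set: "e \<in> cycle_edges vs \<Longrightarrow> e \<subseteq> set vs"
proof
  fix x assume "e \<in> cycle_edges vs" "x \<in> e"
  then obtain i where i: "i < length vs" "x = vs ! i \<or> x = vs ! ((i + 1) mod length vs)"
    unfolding cycle_edges_def by auto
  then have "0 < length vs" by linarith
  then have "(i + 1) mod length vs < length vs" by simp
  then show "x \<in> set vs" using i by auto
qed

lemma cycle_edges_take_first:
  "2 \<le> k \<Longrightarrow> k < length ps \<Longrightarrow> {ps ! 0, ps ! 1} \<in> cycle_edges (take (Suc k) ps)"
  unfolding cycle_edges_def by (rule CollectI, rule exI[of _ 0]) simp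

lemma cycle_edges_take_closing:
  "k < length ps \<Longrightarrow> {ps ! 0, ps ! k} \<in> cycle_edges (take (Suc k) ps)"
  unfolding cycle_edges_def by (rule CollectI, rule exI[of _ k]) (simp add: insert_commute)

lemma is_cycle_take_graph_path:
  assumes path: "graph_path V E ps" and "2 \<le> k" "k < length ps" and chord: "{ps ! k, ps ! 0} \<in> E"
  shows "is_cycle V E (cycle_edges (take (Suc k) ps))"
proof -
  let ?vs = "take (Suc k) ps"
  have len: "length ?vs = Suc k" using \<open>k < length ps\<close> by simp
  have "cycle_edges ?vs \<subseteq> E"
  proof
    fix e assume "e \<in> cycle_edges ?vs"
    then obtain i where i: "i < Suc k" "e = {?vs ! i, ?vs ! ((i + 1) mod Suc k)}"
      unfolding cycle_edges_def len by auto
    show "e \<in> E"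
    proof (cases "i < k")
      case True
      then show ?thesis using i path \<open>k < length ps\<close> unfolding graph_path_def by auto
    next
      case False
      then have "i = k" using i(1) by simp
      then show ?thesis using i chord by simp
    qed
  qed
  moreover have "set ?vs \<subseteq> V" "distinct ?vs"
    using path set_take_subset[of "Suc k" ps] unfolding graph_path_def by auto
  ultimately show ?thesis
    unfolding is_cycle_def using len \<open>2 \<le> k\<close> by (intro exI[of _ ?vs]) auto
qed

text \<open>The two chords close cycles on the prefixes up to \<open>i\<close> and up to \<open>j\<close>; both contain the
  first edge of the path, but only the second contains \<open>ps ! j\<close>.\<close>

lemma graph_path_two_chords_from_start:
  assumes path: "graph_path V E ps" and uniq: "edges_in_unique_cycle V E"
    and ij: "2 \<le> i" "i < j" "j < length ps"
    and chords: "{ps ! i, ps ! 0} \<in> E" "{ps ! j, ps ! 0} \<in> E"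
  shows False
proof -
  let ?Ci = "cycle_edges (take (Suc i) ps)" and ?Cj = "cycle_edges (take (Suc j) ps)"
  have cyc_i: "is_cycle V E ?Ci" and cyc_j: "is_cycle V E ?Cj"
    using is_cycle_take_graph_path[OF path] ij chords by auto
  have "{ps ! 0, ps ! (0 + 1)} \<in> E" using path ij unfolding graph_path_def by auto
  moreover have "{ps ! 0, ps ! 1} \<in> ?Ci" "{ps ! 0, ps ! 1} \<in> ?Cj"
    using cycle_edges_take_first[of i ps] cycle_edges_take_first[of j ps] ij by auto
  ultimately have "?Ci = ?Cj" using uniq cyc_i cyc_j unfolding edges_in_unique_cycle_def by auto
  then have "ps ! j \<in> set (take (Suc i) ps)"
    using cycle_edges_take_closing[OF ij(3)] cycle_edges_subset_set by blast
  then obtain k where "k < Suc i" "ps ! k = ps ! j" using ij by (auto simp: in_set_conv_nth)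
  moreover have "distinct ps" using path unfolding graph_path_def by simp
  ultimately show False using ij nth_eq_iff_index_eq[of ps k j] by auto
qed

lemma exists_longest_graph_path:
  assumes "graph V E" "v \<in> V"
  obtains ps where "graph_path V E ps" "\<And>qs. graph_path V E qs \<Longrightarrow> length qs \<le> length ps"
proof -
  have "graph_path V E [v]" using \<open>v \<in> V\<close> unfolding graph_path_def by simp
  moreover have "length qs < Suc (card V)" if "graph_path V E qs" for qs
  proof -
    have "card (set qs) \<le> card V"
      using that \<open>graph V E\<close> card_mono unfolding graph_path_def graph_def by blast
    then show ?thesis using that distinct_card unfolding graph_path_def by fastforce
  qed
  ultimately show ?thesis using that ex_has_greatest_nat[of "graph_path V E" "[v]" length] by blast
qed

lemma longest_graph_path_nbhd_subset:
  assumes "graph V E" and path: "graph_path V E ps"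
    and longest: "\<And>qs. graph_path V E qs \<Longrightarrow> length qs \<le> length ps"
  shows "nbhd E (ps ! 0) \<subseteq> set ps"
proof
  fix u assume "u \<in> nbhd E (ps ! 0)"
  then have edge: "{u, ps ! 0} \<in> E" unfolding nbhd_def by simp
  show "u \<in> set ps"
  proof (rule ccontr)
    assume "u \<notin> set ps"
    moreover have "u \<in> V" using graph_edge_in_vertices[OF \<open>graph V E\<close> edge] .
    ultimately have "graph_path V E (u # ps)"
      using path edge unfolding graph_path_def by (auto simp: nth_Cons split: nat.split)
    then show False using longest by fastforce
  qed
qed

lemma low_degree_vertex:
  assumes g: "graph V E" and "V \<noteq> {}" and uniq: "edges_in_unique_cycle V E"
  shows "\<exists>x\<in>V. card (nbhd E x) \<le> 2"
proof -
  obtain ps where path: "graph_path V E ps"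
    and longest: "\<And>qs. graph_path V E qs \<Longrightarrow> length qs \<le> length ps"
    using exists_longest_graph_path[OF g] \<open>V \<noteq> {}\<close> by blast
  let ?x = "ps ! 0"
  have "?x \<in> V" using path unfolding graph_path_def by (auto simp: hd_conv_nth[symmetric])
  have N: "nbhd E ?x \<subseteq> set ps" by (rule longest_graph_path_nbhd_subset[OF g path longest])
  have chord: "\<exists>i. 2 \<le> i \<and> i < length ps \<and> ps ! i = c \<and> {ps ! i, ps ! 0} \<in> E"
    if c: "c \<in> nbhd E ?x - {ps ! 1}" for c
  proof -
    have edge: "{c, ?x} \<in> E" using c unfolding nbhd_def by simp
    obtain i where "i < length ps" "ps ! i = c" using c N by (metis DiffD1 in_set_conv_nth subsetD)
    moreover have "c \<noteq> ?x" "c \<noteq> ps ! 1" using graph_edge_neq[OF g edge] c by auto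
    then have "i \<noteq> 0" "i \<noteq> 1" using \<open>ps ! i = c\<close> by metis+
    then have "2 \<le> i" by linarith
    ultimately show ?thesis using edge by blast
  qed
  have "card (nbhd E ?x) \<le> 2"
  proof (rule ccontr)
    assume "\<not> ?thesis"
    then have "\<not> card (nbhd E ?x - {ps ! 1}) \<le> Suc 0" by (auto simp: card_Diff_singleton_if)
    moreover have "finite (nbhd E ?x - {ps ! 1})" using N finite_subset by blast
    ultimately obtain a b where "a \<in> nbhd E ?x - {ps ! 1}" "b \<in> nbhd E ?x - {ps ! 1}" "a \<noteq> b"
      using card_le_Suc0_iff_eq by blast
    obtain i where i: "2 \<le> i" "i < length ps" "ps ! i = a" "{ps ! i, ps ! 0} \<in> E"
      using chord[OF \<open>a \<in> _\<close>] by blast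
    obtain j where j: "2 \<le> j" "j < length ps" "ps ! j = b" "{ps ! j, ps ! 0} \<in> E"
      using chord[OF \<open>b \<in> _\<close>] by blast
    have "i \<noteq> j" using i j \<open>a \<noteq> b\<close> by auto
    then show False
      using graph_path_two_chords_from_start[OF path uniq] i j by (meson linorder_neqE_nat)
  qed
  then show ?thesis using \<open>?x \<in> V\<close> by blast
qed

lemma edges_in_unique_cycle_delete_vertex:
  assumes "graph V E" "edges_in_unique_cycle V E"
  shows "graph (V - {x}) {e \<in> E. x \<notin> e}" "edges_in_unique_cycle (V - {x}) {e \<in> E. x \<notin> e}"
proof -
  show "graph (V - {x}) {e \<in> E. x \<notin> e}" using assms(1) unfolding graph_def by fastforce
  have "is_cycle (V - {x}) {e \<in> E. x \<notin> e} C \<Longrightarrow> is_cycle V E C" for C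
    unfolding is_cycle_def by blast
  then show "edges_in_unique_cycle (V - {x}) {e \<in> E. x \<notin> e}"
    using assms(2) unfolding edges_in_unique_cycle_def by blast
qed

lemma proper_colouring_extend_low_degree:
  assumes g: "graph V E" and deg: "card (nbhd E x) \<le> 2"
    and c: "proper_colouring {e \<in> E. x \<notin> e} c"
  obtains k where "k \<in> {1, 2, 3}" "proper_colouring E (c(x := k))"
proof -
  have fin: "finite (nbhd E x)"
    using finite_subset[OF graph_nbhd_subset[OF g]] g unfolding graph_def by blast
  have "\<not> {1, 2, 3} \<subseteq> c ` nbhd E x"
  proof
    assume "{1, 2, 3} \<subseteq> c ` nbhd E x"
    then have "card {1, 2, 3 :: nat} \<le> card (c ` nbhd E x)"
      by (rule card_mono[OF finite_imageI[OF fin]])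
    then show False using card_image_le[OF fin, of c] deg by simp
  qed
  then obtain k where k: "k \<in> {1, 2, 3}" "k \<notin> c ` nbhd E x" by blast
  have "(c(x := k)) u \<noteq> (c(x := k)) v" if uv: "{u, v} \<in> E" for u v
  proof (cases "u = x \<or> v = x")
    case True
    moreover have "u \<noteq> v" by (rule graph_edge_neq[OF g uv])
    moreover have "u \<in> nbhd E v" "v \<in> nbhd E u"
      using uv unfolding nbhd_def by (simp_all add: insert_commute)
    ultimately show ?thesis using k(2) by auto
  next
    case False
    then show ?thesis using c uv unfolding proper_colouring_def by auto
  qed
  then have "proper_colouring E (c(x := k))" unfolding proper_colouring_def by blast
  with k(1) show ?thesis by (rule that)
qed

lemma edges_in_unique_cycle_three_colouring:
  assumes "graph V E" "edges_in_unique_cycle V E"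
  shows "\<exists>c. (\<forall>v\<in>V. c v \<in> {1, 2, 3}) \<and> proper_colouring E c"
  using assms
proof (induction "card V" arbitrary: V E rule: less_induct)
  case less
  show ?case
  proof (cases "V = {}")
    case True
    then have "E = {}" using less.prems(1) unfolding graph_def by auto
    then show ?thesis unfolding proper_colouring_def by (intro exI[of _ "\<lambda>_. 1"]) simp
  next
    case False
    obtain x where x: "x \<in> V" "card (nbhd E x) \<le> 2"
      using low_degree_vertex[OF less.prems(1) False less.prems(2)] by blast
    have "finite V" using less.prems(1) unfolding graph_def by simp
    then have "card (V - {x}) < card V" using x(1) by (rule card_Diff1_less)
    then obtain c where c: "\<forall>v\<in>V - {x}. c v \<in> {1, 2, 3}" "proper_colouring {e \<in> E. x \<notin> e} c"
      using less.hyps[OF _ edges_in_unique_cycle_delete_vertex[OF less.prems]] by blast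
    obtain k where "k \<in> {1, 2, 3}" "proper_colouring E (c(x := k))"
      using proper_colouring_extend_low_degree[OF less.prems(1) x(2) c(2)] .
    then show ?thesis using c(1) by (intro exI[of _ "c(x := k)"]) auto
  qed
qed

lemma adj_rel_rtrancl_sym: "(u, v) \<in> (adj_rel F)\<^sup>* \<Longrightarrow> (v, u) \<in> (adj_rel F)\<^sup>*"
proof (induction rule: rtrancl_induct)
  case (step y z)
  then have "(z, y) \<in> adj_rel F" unfolding adj_rel_def by (simp add: insert_commute)
  then show ?case using step.IH by (rule converse_rtrancl_into_rtrancl)
qed simp

lemma witness_set_eq:
  assumes "y \<in> witness_set V F w"
  shows "witness_set V F y = witness_set V F w"
proof -
  have wy: "(w, y) \<in> (adj_rel F)\<^sup>*" using assms unfolding witness_set_def by simp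
  then have yw: "(y, w) \<in> (adj_rel F)\<^sup>*" by (rule adj_rel_rtrancl_sym)
  show ?thesis unfolding witness_set_def
    by (auto intro: rtrancl_trans[OF wy] rtrancl_trans[OF yw])
qed

lemma witness_set_of_member:
  assumes "W \<in> witness_structure V F" "x \<in> W"
  shows "witness_set V F x = W"
proof -
  obtain w where "W = witness_set V F w" using assms(1) unfolding witness_structure_def by blast
  then show ?thesis using witness_set_eq[of x V F w] assms(2) by simp
qed

lemma contr_edges_in_witness_structure:
  "{X, Y} \<in> contr_edges V E F \<Longrightarrow> X \<in> witness_structure V F \<and> Y \<in> witness_structure V F"
  unfolding contr_edges_def by (auto simp: doubleton_eq_iff)

lemma cable_path_end_edges:
  assumes "cable_path VH EH p" "2 \<le> length p"
  shows "{p ! 0, p ! 1} \<in> EH" "{p ! (length p - 1), p ! (length p - 2)} \<in> EH"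
proof -
  have edges: "\<And>i. i + 1 < length p \<Longrightarrow> {p ! i, p ! (i + 1)} \<in> EH"
    using assms(1) unfolding cable_path_def by blast
  show "{p ! 0, p ! 1} \<in> EH" using edges[of 0] assms(2) by simp
  have "length p - 2 + 1 = length p - 1" using assms(2) by simp
  then show "{p ! (length p - 1), p ! (length p - 2)} \<in> EH"
    using edges[of "length p - 2"] assms(2) by (simp add: insert_commute)
qed

lemma compatible_pullback_proper_colouring:
  assumes "proper_colouring (contr_edges V E F) c"
  shows "compatible V E F (\<lambda>v. c (witness_set V F v))"
proof -
  let ?f = "\<lambda>v. c (witness_set V F v)"
  have separated: "\<forall>x\<in>X. \<forall>y\<in>Y. ?f x \<noteq> ?f y" if XY: "{X, Y} \<in> contr_edges V E F" for X Y
  proof (intro ballI)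
    fix x y assume "x \<in> X" "y \<in> Y"
    then have "witness_set V F x = X" "witness_set V F y = Y"
      using witness_set_of_member contr_edges_in_witness_structure[OF XY] by (metis, metis)
    then show "?f x \<noteq> ?f y" using assms XY unfolding proper_colouring_def by simp
  qed
  have end_edges_separated:
    "(\<forall>x\<in>p ! 0. \<forall>y\<in>p ! 1. ?f x \<noteq> ?f y)
      \<and> (\<forall>x\<in>p ! (length p - 1). \<forall>y\<in>p ! (length p - 2). ?f x \<noteq> ?f y)"
    if "cable_path (witness_structure V F) (contr_edges V E F) p \<and> 3 \<le> length p" for p
  proof -
    have p: "cable_path (witness_structure V F) (contr_edges V E F) p" "2 \<le> length p"
      using that by auto
    show ?thesis
      using separated[OF cable_path_end_edges(1)[OF p]] separated[OF cable_path_end_edges(2)[OF p]]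
      by blast
  qed
  show ?thesis
    unfolding compatible_def
  proof (intro conjI allI impI, goal_cases)
    case 1
    show ?case using witness_set_of_member by (metis (no_types))
  next
    case (2 X Y)
    then show ?case using separated by blast
  next
    case (3 p)
    then show ?case using end_edges_separated[of p] by blast
  next
    case (4 p)
    then show ?case using end_edges_separated[of p] by blast
  qed
qed

theorem lemma3p1:
  fixes V :: "'a set" and E F :: "'a set set"
  assumes "graph V E"
    and "F \<subseteq> E"
    and "cactus (witness_structure V F) (contr_edges V E F)"
  shows "\<exists>f :: 'a \<Rightarrow> nat. (\<forall>v\<in>V. f v \<in> {1, 2, 3}) \<and> compatible V E F f"
proof -
  have "graph (witness_structure V F) (contr_edges V E F)"
    using assms(3) unfolding cactus_def by blast
  then obtain c where c: "\<forall>X\<in>witness_structure V F. c X \<in> {1, 2, 3}"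
    "proper_colouring (contr_edges V E F) c"
    using edges_in_unique_cycle_three_colouring cactus_edges_in_unique_cycle[OF assms(3)] by blast
  have "\<forall>v\<in>V. c (witness_set V F v) \<in> {1, 2, 3}"
    using c(1) unfolding witness_structure_def by blast
  with compatible_pullback_proper_colouring[OF c(2)] show ?thesis
    by (intro exI[of _ "\<lambda>v. c (witness_set V F v)"] conjI)
qed

end
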